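(* For every edge-colored hypergraph $H=(V,E,C,\ell)$ with weights $w_e \ge 0$, the optimal value of the node-weighted multiway cut LP relaxation on the reduced graph $G(H)$ is at most the optimal value of the \textsc{MinECC} LP relaxation on $H$. Moreover, the inequality can be strict: for $C=\{1,2,3\}$ and $H$ the star graph with center $v_0$, leaves $v_1,v_2,v_3$ and unit-weight edges $e_i=\{v_0,v_i\}$ of color $i$ ($i=1,2,3$), the \textsc{MinECC} LP relaxation has optimal value $2$ while the node-weighted multiway cut LP relaxation on $G(H)$ has optimal value $\frac32$.
   Context: An edge-colored hypergraph is $H=(V,E,C,\ell)$ with finite node set $V$, a multiset $E$ of nonempty subsets of $V$ (edges), a color set $C=[k]$, a map $\ell\colon E\to C$, and weights $w_e\ge 0$. The \textsc{MinECC} LP relaxation has variables $x_v^i$ ($v\in V,i\in C$), $x_e$ ($e\in E$) and is: minimize $\sum_{e} w_e x_e$ subject to $\sum_{i=1}^k x_v^i = k-1$ for all $v$; $x_e\ge x_v^{\ell(e)}$ for all $e$ and $v\in e$; $0\le x_v^i\le 1$; $0\le x_e\le 1$. The reduced graph $G(H)=(\hat V,\hat E)$ has node set $\hat V = T\cup V\cup V_E$, where $T=\{t_1,\dots,t_k\}$ are terminal nodes (one per color) and $V_E=\{v_e: e\in E\}$ has one node per edge of $H$; its edge set consists of $(v,v_e)$ for every $e\in E$ and $v\in e$, and $(t_{\ell(e)},v_e)$ for every $e\in E$. Nodes $v_e$ have weight $w_e$; nodes in $V\cup T$ have infinite weight. The node-weighted multiway cut LP relaxation on $G(H)$ has variables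 $d_u\ge 0$ for $u\in\hat V$ and $y_u^i$ for $u\in \hat V$, $i\in[k]$, with $d_u=0$ for all $u\in V\cup T$ (infinite-weight nodes), and is: minimize $\sum_{e\in E} w_e d_{v_e}$ subject to $y_b^i \le y_a^i + d_b$ and $y_a^i\le y_b^i + d_a$ for every edge $(a,b)\in\hat E$ and every $i\in[k]$; $y_{t_i}^i=0$ for all $i$; $y_{t_i}^j\ge 1$ for all $i\neq j$. (Equivalently: minimize $\sum_e w_e d_{v_e}$ subject to $d\ge 0$, $d=0$ on $V\cup T$, and $\sum_{u\in P} d_u\ge 1$ for every path $P$ in $G(H)$ between two distinct terminals.) *)

theory Defs
  imports Complex_Main "HOL-Library.Extended_Real"
begin

text \<open>The multiset of edges is represented by a finite index set E together with
  a map edge assigning to each index its node set (so parallel edges are allowed).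
  col is the coloring l, w the weights.\<close>

definition ec_hypergraph ::
  "'v set \<Rightarrow> 'e set \<Rightarrow> ('e \<Rightarrow> 'v set) \<Rightarrow> nat \<Rightarrow> ('e \<Rightarrow> nat) \<Rightarrow> ('e \<Rightarrow> real) \<Rightarrow> bool" where
  "ec_hypergraph V E edge k col w \<longleftrightarrow>
     finite V \<and> finite E \<and>
     (\<forall>e\<in>E. edge e \<noteq> {} \<and> edge e \<subseteq> V \<and> col e \<in> {1..k} \<and> w e \<ge> 0)"

definition minecc_lp_feasible ::
  "'v set \<Rightarrow> 'e set \<Rightarrow> ('e \<Rightarrow> 'v set) \<Rightarrow> nat \<Rightarrow> ('e \<Rightarrow> nat)
    \<Rightarrow> ('v \<Rightarrow> nat \<Rightarrow> real) \<Rightarrow> ('e \<Rightarrow> real) \<Rightarrow> bool" where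
  "minecc_lp_feasible V E edge k col x xe \<longleftrightarrow>
     (\<forall>v\<in>V. (\<Sum>i=1..k. x v i) = real k - 1) \<and>
     (\<forall>e\<in>E. \<forall>v\<in>edge e. xe e \<ge> x v (col e)) \<and>
     (\<forall>v\<in>V. \<forall>i\<in>{1..k}. 0 \<le> x v i \<and> x v i \<le> 1) \<and>
     (\<forall>e\<in>E. 0 \<le> xe e \<and> xe e \<le> 1)"

text \<open>Optimal value (infimum of the objective over the feasible region), in the
  extended reals so that an infeasible LP has value +infinity.\<close>

definition minecc_lp_opt ::
  "'v set \<Rightarrow> 'e set \<Rightarrow> ('e \<Rightarrow> 'v set) \<Rightarrow> nat \<Rightarrow> ('e \<Rightarrow> nat) \<Rightarrow> ('e \<Rightarrow> real) \<Rightarrow> ereal" where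
  "minecc_lp_opt V E edge k col w =
     Inf {ereal (\<Sum>e\<in>E. w e * xe e) | x xe. minecc_lp_feasible V E edge k col x xe}"

datatype ('v, 'e) gnode = Term nat | VNode 'v | ENode 'e

definition red_nodes :: "'v set \<Rightarrow> 'e set \<Rightarrow> nat \<Rightarrow> ('v, 'e) gnode set" where
  "red_nodes V E k = Term ` {1..k} \<union> VNode ` V \<union> ENode ` E"

definition red_edges ::
  "'e set \<Rightarrow> ('e \<Rightarrow> 'v set) \<Rightarrow> ('e \<Rightarrow> nat) \<Rightarrow> (('v, 'e) gnode \<times> ('v, 'e) gnode) set" where
  "red_edges E edge col =
     {(VNode v, ENode e) | v e. e \<in> E \<and> v \<in> edge e} \<union>
     {(Term (col e), ENode e) | e. e \<in> E}"

text \<open>Node-weighted multiway cut LP relaxation on G(H): variables d u and y u i.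
  Infinite-weight nodes (V and T) are forced to have d = 0.\<close>

definition nwmc_lp_feasible ::
  "'v set \<Rightarrow> 'e set \<Rightarrow> ('e \<Rightarrow> 'v set) \<Rightarrow> nat \<Rightarrow> ('e \<Rightarrow> nat)
    \<Rightarrow> (('v, 'e) gnode \<Rightarrow> real) \<Rightarrow> (('v, 'e) gnode \<Rightarrow> nat \<Rightarrow> real) \<Rightarrow> bool" where
  "nwmc_lp_feasible V E edge k col d y \<longleftrightarrow>
     (\<forall>u\<in>red_nodes V E k. d u \<ge> 0) \<and>
     (\<forall>v\<in>V. d (VNode v) = 0) \<and>
     (\<forall>i\<in>{1..k}. d (Term i) = 0) \<and>
     (\<forall>(a, b)\<in>red_edges E edge col. \<forall>i\<in>{1..k}.
        y b i \<le> y a i + d b \<and> y a i \<le> y b i + d a) \<and>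
     (\<forall>i\<in>{1..k}. y (Term i) i = 0) \<and>
     (\<forall>i\<in>{1..k}. \<forall>j\<in>{1..k}. i \<noteq> j \<longrightarrow> y (Term i) j \<ge> 1)"

definition nwmc_lp_opt ::
  "'v set \<Rightarrow> 'e set \<Rightarrow> ('e \<Rightarrow> 'v set) \<Rightarrow> nat \<Rightarrow> ('e \<Rightarrow> nat) \<Rightarrow> ('e \<Rightarrow> real) \<Rightarrow> ereal" where
  "nwmc_lp_opt V E edge k col w =
     Inf {ereal (\<Sum>e\<in>E. w e * d (ENode e)) | d y. nwmc_lp_feasible V E edge k col d y}"

end

theory Submission
  imports Defs
begin

text \<open>Given a MinECC LP solution (x, x_e), label the terminal t_j by 0 in colour j and 1
  otherwise, a node v by x_v, and an edge node v_e by x_e in colour \<ell>(e) and 1 otherwise,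
  and cut v_e by d = x_e. The only nontrivial edge constraint is 1 \<le> x_v^i + x_e for
  i \<noteq> \<ell>(e), which follows from x_e \<ge> x_v^{\<ell>(e)} and from the fact that k numbers in [0,1]
  summing to k - 1 have pairwise sums at least 1.
  On the star, x_{v_0} forces x_{e_1} + x_{e_2} + x_{e_3} \<ge> 2, while the reduced graph only
  sees the paths t_i, v_{e_i}, v_0, v_{e_j}, t_j, which are cut to the extent 1 by d = 1/2 on
  every edge node.\<close>

lemma ball_red_edges_iff:
  "(\<forall>(a, b)\<in>red_edges E edge col. P a b) \<longleftrightarrow>
   (\<forall>e\<in>E. (\<forall>v\<in>edge e. P (VNode v) (ENode e)) \<and> P (Term (col e)) (ENode e))"
  by (auto simp: red_edges_def)

lemma pair_sum_ge_one:
  fixes f :: "'a \<Rightarrow> real"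
  assumes "finite A" and sum_eq: "(\<Sum>j\<in>A. f j) = real (card A) - 1"
    and le_one: "\<forall>j\<in>A. f j \<le> 1" and "i \<in> A" "c \<in> A" "i \<noteq> c"
  shows "1 \<le> f i + f c"
proof -
  let ?R = "A - {i, c}"
  have split: "(\<Sum>j\<in>A. f j) = (\<Sum>j\<in>?R. f j) + (f i + f c)"
    using assms sum.subset_diff[of "{i, c}" A f] by simp
  have "(\<Sum>j\<in>?R. f j) \<le> real (card ?R)"
    using le_one sum_bounded_above[of ?R f 1] by simp
  moreover have "card ?R = card A - 2"
    using assms by (simp add: card_Diff_subset)
  moreover have "card A \<ge> 2"
    using assms card_mono[of A "{i, c}"] by simp
  ultimately show ?thesis
    using sum_eq split by simp
qed

lemma minecc_lp_feasible_other_colour_ge_one: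
  assumes F: "minecc_lp_feasible V E edge k col x xe"
    and "e \<in> E" "v \<in> edge e" "v \<in> V" "i \<in> {1..k}" "col e \<in> {1..k}" "i \<noteq> col e"
  shows "1 \<le> x v i + xe e"
proof -
  have "1 \<le> x v i + x v (col e)"
    using assms pair_sum_ge_one[of "{1..k}" "x v" i "col e"]
    unfolding minecc_lp_feasible_def by simp
  moreover have "x v (col e) \<le> xe e"
    using F assms unfolding minecc_lp_feasible_def by blast
  ultimately show ?thesis by linarith
qed

lemma minecc_lp_feasible_rainbow_star_ge:
  assumes F: "minecc_lp_feasible V E edge k col x xe"
    and "v \<in> V" "S \<subseteq> E" "\<forall>e\<in>S. v \<in> edge e" and bij: "bij_betw col S {1..k}"
  shows "real k - 1 \<le> (\<Sum>e\<in>S. xe e)"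
proof -
  have "real k - 1 = (\<Sum>i=1..k. x v i)"
    using F assms unfolding minecc_lp_feasible_def by simp
  also have "\<dots> = (\<Sum>e\<in>S. x v (col e))"
    using sum.reindex_bij_betw[OF bij, of "x v"] by simp
  also have "\<dots> \<le> (\<Sum>e\<in>S. xe e)"
    using F assms unfolding minecc_lp_feasible_def by (intro sum_mono) blast
  finally show ?thesis .
qed

definition nwmc_cut_of :: "('e \<Rightarrow> real) \<Rightarrow> ('v, 'e) gnode \<Rightarrow> real" where
  "nwmc_cut_of xe u = (case u of ENode e \<Rightarrow> xe e | _ \<Rightarrow> 0)"

definition nwmc_label_of ::
  "('e \<Rightarrow> nat) \<Rightarrow> ('v \<Rightarrow> nat \<Rightarrow> real) \<Rightarrow> ('e \<Rightarrow> real) \<Rightarrow> ('v, 'e) gnode \<Rightarrow> nat \<Rightarrow> real" where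
  "nwmc_label_of col x xe u i =
     (case u of Term j \<Rightarrow> if i = j then 0 else 1
              | VNode v \<Rightarrow> x v i
              | ENode e \<Rightarrow> if i = col e then xe e else 1)"

lemma nwmc_cut_of_simps [simp]:
  "nwmc_cut_of xe (ENode e) = xe e" "nwmc_cut_of xe (VNode v) = 0" "nwmc_cut_of xe (Term i) = 0"
  by (simp_all add: nwmc_cut_of_def)

lemma nwmc_label_of_simps [simp]:
  "nwmc_label_of col x xe (Term j) i = (if i = j then 0 else 1)"
  "nwmc_label_of col x xe (VNode v) i = x v i"
  "nwmc_label_of col x xe (ENode e) i = (if i = col e then xe e else 1)"
  by (simp_all add: nwmc_label_of_def)

lemma nwmc_lp_feasible_of_minecc:
  assumes H: "ec_hypergraph V E edge k col w"
    and F: "minecc_lp_feasible V E edge k col x xe"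
  shows "nwmc_lp_feasible V E edge k col (nwmc_cut_of xe) (nwmc_label_of col x xe)"
proof -
  have edges: "\<forall>e\<in>E. edge e \<subseteq> V \<and> col e \<in> {1..k}"
    using H unfolding ec_hypergraph_def by blast
  have x_bounds: "\<forall>v\<in>V. \<forall>i\<in>{1..k}. 0 \<le> x v i \<and> x v i \<le> 1"
    and xe_ge: "\<forall>e\<in>E. \<forall>v\<in>edge e. x v (col e) \<le> xe e"
    and xe_bounds: "\<forall>e\<in>E. 0 \<le> xe e \<and> xe e \<le> 1"
    using F unfolding minecc_lp_feasible_def by blast+
  have vertex_edge: "(if i = col e then xe e else 1) \<le> x v i + xe e \<and>
      x v i \<le> (if i = col e then xe e else 1)"
    if "e \<in> E" "v \<in> edge e" "i \<in> {1..k}" for e v i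
  proof (cases "i = col e")
    case True
    then show ?thesis
      using that edges x_bounds xe_ge by fastforce
  next
    case False
    have "v \<in> V"
      using that edges by blast
    then show ?thesis
      using False that x_bounds minecc_lp_feasible_other_colour_ge_one[OF F, of e v i] edges
      by simp
  qed
  show ?thesis
    unfolding nwmc_lp_feasible_def ball_red_edges_iff
  proof (intro conjI ballI)
    fix u assume "u \<in> red_nodes V E k"
    then show "0 \<le> nwmc_cut_of xe u"
      using xe_bounds by (auto simp: red_nodes_def)
  qed (use vertex_edge xe_bounds in simp_all)
qed

theorem nwmc_lp_opt_le_minecc_lp_opt:
  assumes "ec_hypergraph V E edge k col w"
  shows "nwmc_lp_opt V E edge k col w \<le> minecc_lp_opt V E edge k col w"
  unfolding nwmc_lp_opt_def minecc_lp_opt_def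
proof (rule Inf_mono, safe)
  fix x xe assume "minecc_lp_feasible V E edge k col x xe"
  then have "nwmc_lp_feasible V E edge k col (nwmc_cut_of xe) (nwmc_label_of col x xe)"
    by (rule nwmc_lp_feasible_of_minecc[OF assms])
  then have "ereal (\<Sum>e\<in>E. w e * xe e)
      \<in> {ereal (\<Sum>e\<in>E. w e * d (ENode e)) | d y. nwmc_lp_feasible V E edge k col d y}"
    by (intro CollectI exI[of _ "nwmc_cut_of xe"] exI[of _ "nwmc_label_of col x xe"]) simp
  then show "\<exists>a\<in>{ereal (\<Sum>e\<in>E. w e * d (ENode e)) | d y. nwmc_lp_feasible V E edge k col d y}.
      a \<le> ereal (\<Sum>e\<in>E. w e * xe e)"
    by blast
qed

lemma nwmc_lp_feasible_edgeD:
  assumes "nwmc_lp_feasible V E edge k col d y" "(a, b) \<in> red_edges E edge col" "i \<in> {1..k}"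
  shows "y b i \<le> y a i + d b" "y a i \<le> y b i + d a"
  using assms unfolding nwmc_lp_feasible_def by fast+

lemma nwmc_lp_feasible_shared_vertex_ge_one:
  assumes F: "nwmc_lp_feasible V E edge k col d y"
    and "e \<in> E" "e' \<in> E" "v \<in> edge e" "v \<in> edge e'" "v \<in> V"
    and "col e \<in> {1..k}" "col e' \<in> {1..k}" "col e \<noteq> col e'"
  shows "1 \<le> d (ENode e) + d (ENode e')"
proof -
  let ?j = "col e'"
  have path: "(Term (col e), ENode e) \<in> red_edges E edge col" "(VNode v, ENode e) \<in> red_edges E edge col"
    "(VNode v, ENode e') \<in> red_edges E edge col" "(Term ?j, ENode e') \<in> red_edges E edge col"
    using assms by (auto simp: red_edges_def)
  \<comment> \<open>follow the path t_{col e}, v_e, v, v_{e'}, t_{col e'} in colour col e'\<close>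
  have "1 \<le> y (Term (col e)) ?j"
    using F assms unfolding nwmc_lp_feasible_def by blast
  also have "\<dots> \<le> y (ENode e) ?j"
    using nwmc_lp_feasible_edgeD(2)[OF F path(1)] F assms unfolding nwmc_lp_feasible_def by simp
  also have "\<dots> \<le> y (VNode v) ?j + d (ENode e)"
    using nwmc_lp_feasible_edgeD(1)[OF F path(2)] assms by simp
  also have "\<dots> \<le> y (ENode e') ?j + d (ENode e)"
    using nwmc_lp_feasible_edgeD(2)[OF F path(3)] F assms unfolding nwmc_lp_feasible_def by simp
  also have "\<dots> \<le> y (Term ?j) ?j + d (ENode e') + d (ENode e)"
    using nwmc_lp_feasible_edgeD(1)[OF F path(4)] assms by simp
  also have "\<dots> = d (ENode e) + d (ENode e')"
    using F assms unfolding nwmc_lp_feasible_def by simp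
  finally show ?thesis .
qed

lemma one_to_three: "{1..3::nat} = {1, 2, 3}"
  by auto

lemma minecc_lp_opt_star:
  "minecc_lp_opt {0::nat, 1, 2, 3} {1::nat, 2, 3} (\<lambda>i. {0, i}) 3 (\<lambda>i. i) (\<lambda>_. 1) = ereal 2"
  unfolding minecc_lp_opt_def
proof (rule cInf_eq_minimum, safe)
  define x :: "nat \<Rightarrow> nat \<Rightarrow> real"
    where "x v i = (if v = 0 then (if i = 3 then 0 else 1) else if i = v then 0 else 1)" for v i
  define xe :: "nat \<Rightarrow> real" where "xe e = (if e = 3 then 0 else 1)" for e
  have "minecc_lp_feasible {0::nat, 1, 2, 3} {1::nat, 2, 3} (\<lambda>i. {0, i}) 3 (\<lambda>i. i) x xe"
    unfolding minecc_lp_feasible_def one_to_three by (auto simp: x_def xe_def)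
  moreover have "(\<Sum>e\<in>{1::nat, 2, 3}. 1 * xe e) = 2"
    by (simp add: xe_def)
  ultimately show "\<exists>x xe. ereal 2 = ereal (\<Sum>e\<in>{1::nat, 2, 3}. 1 * xe e) \<and>
      minecc_lp_feasible {0::nat, 1, 2, 3} {1::nat, 2, 3} (\<lambda>i. {0, i}) 3 (\<lambda>i. i) x xe"
    by metis
next
  fix x xe assume F: "minecc_lp_feasible {0::nat, 1, 2, 3} {1::nat, 2, 3} (\<lambda>i. {0, i}) 3 (\<lambda>i. i) x xe"
  have "real 3 - 1 \<le> (\<Sum>e\<in>{1::nat, 2, 3}. xe e)"
    by (rule minecc_lp_feasible_rainbow_star_ge[OF F, of 0]) (auto simp: one_to_three bij_betw_def)
  then show "ereal 2 \<le> ereal (\<Sum>e\<in>{1::nat, 2, 3}. 1 * xe e)"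
    by simp
qed

lemma nwmc_lp_opt_star:
  "nwmc_lp_opt {0::nat, 1, 2, 3} {1::nat, 2, 3} (\<lambda>i. {0, i}) 3 (\<lambda>i. i) (\<lambda>_. 1) = ereal (3 / 2)"
  unfolding nwmc_lp_opt_def
proof (rule cInf_eq_minimum, safe)
  define d :: "(nat, nat) gnode \<Rightarrow> real"
    where "d u = (case u of ENode e \<Rightarrow> 1 / 2 | _ \<Rightarrow> 0)" for u
  define y :: "(nat, nat) gnode \<Rightarrow> nat \<Rightarrow> real"
    where "y u j = (case u of Term i \<Rightarrow> if i = j then 0 else 1
                            | VNode v \<Rightarrow> if v = 0 \<or> v = j then 1 / 2 else 1
                            | ENode e \<Rightarrow> if e = j then 1 / 2 else 1)" for u j
  have "nwmc_lp_feasible {0::nat, 1, 2, 3} {1::nat, 2, 3} (\<lambda>i. {0, i}) 3 (\<lambda>i. i) d y"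
    unfolding nwmc_lp_feasible_def ball_red_edges_iff one_to_three
    by (auto simp: d_def y_def red_nodes_def)
  moreover have "(\<Sum>e\<in>{1::nat, 2, 3}. 1 * d (ENode e)) = 3 / 2"
    by (simp add: d_def)
  ultimately show "\<exists>d y. ereal (3 / 2) = ereal (\<Sum>e\<in>{1::nat, 2, 3}. 1 * d (ENode e)) \<and>
      nwmc_lp_feasible {0::nat, 1, 2, 3} {1::nat, 2, 3} (\<lambda>i. {0, i}) 3 (\<lambda>i. i) d y"
    by metis
next
  fix d y assume F: "nwmc_lp_feasible {0::nat, 1, 2, 3} {1::nat, 2, 3} (\<lambda>i. {0, i}) 3 (\<lambda>i. i) d y"
  have "1 \<le> d (ENode i) + d (ENode j)" if "i \<in> {1::nat, 2, 3}" "j \<in> {1::nat, 2, 3}" "i \<noteq> j" for i j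
    using that by (intro nwmc_lp_feasible_shared_vertex_ge_one[OF F, of i j 0]) auto
  then have "1 \<le> d (ENode 1) + d (ENode 2)" "1 \<le> d (ENode 1) + d (ENode 3)"
    "1 \<le> d (ENode 2) + d (ENode 3)"
    by simp_all
  then show "ereal (3 / 2) \<le> ereal (\<Sum>e\<in>{1::nat, 2, 3}. 1 * d (ENode e))"
    by simp
qed

theorem theorem1:
  fixes V :: "'v set" and E :: "'e set" and edge :: "'e \<Rightarrow> 'v set"
    and k :: nat and col :: "'e \<Rightarrow> nat" and w :: "'e \<Rightarrow> real"
  shows "(ec_hypergraph V E edge k col w \<longrightarrow>
            nwmc_lp_opt V E edge k col w \<le> minecc_lp_opt V E edge k col w)
         \<and> minecc_lp_opt {0::nat, 1, 2, 3} {1::nat, 2, 3} (\<lambda>i. {0, i}) 3 (\<lambda>i. i) (\<lambda>_. 1) = ereal 2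
         \<and> nwmc_lp_opt {0::nat, 1, 2, 3} {1::nat, 2, 3} (\<lambda>i. {0, i}) 3 (\<lambda>i. i) (\<lambda>_. 1) = ereal (3 / 2)"
  using nwmc_lp_opt_le_minecc_lp_opt minecc_lp_opt_star nwmc_lp_opt_star by blast

end
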